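(* Let $n\geq 4$ and let $T_n$ be the group with generators $z,t_1,\dots,t_{n-1}$ and relations $t_i^2=1$ ($1\le i\le n-1$), $(t_jt_{j+1})^3=1$ ($1\le j\le n-2$), $(t_kt_l)^2=z$ (for $k\le l-2$), $z^2=1$ and $zt_i=t_iz$ ($1\le i\le n-1$). Let $l\in\mathbb{N}$, let $\sigma=s_{i_1}s_{i_2}\cdots s_{i_l}\in\mathbb{S}_n$ with $i_1,\dots,i_l\in\{1,\dots,n-1\}$, and let $i,j\in\{1,\dots,n\}$ with $i\neq j$. Then \[ \sigma\triangleright[i\;j]=[\sigma(i)\;\sigma(j)]\,z^l . \]
   Context: $\mathbb{S}_n$ is the symmetric group, $s_k=(k\;k+1)$ denotes the adjacent transposition, and $p:T_n\to\mathbb{S}_n$ is the surjective homomorphism with $p(t_k)=s_k$, $p(z)=1$; its kernel is $\langle z\rangle$, which is central of order $2$. For $\sigma\in\mathbb{S}_n$ and $t\in T_n$, define $\sigma\triangleright t=\bar\sigma t\bar\sigma^{-1}$, where $\bar\sigma\in T_n$ is any element with $p(\bar\sigma)=\sigma$ (independent of the choice since $z$ is central). For $1\le i,j\le n$, $i\ne j$, the elements $[i\;j]\in T_n$ are defined inductively by $[i\;i+1]=t_i$; $[i\;j]=(s_i\triangleright[i+1\;j])\,z$ for $i+1<j$; and $[j\;i]=[i\;j]\,z$ for $i<j$. *)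

theory Defs
  imports "HOL-Algebra.Group" "HOL-Combinatorics.Transposition"
begin

text \<open>Since every generator is an
involution (t_i^2 = 1, z^2 = 1), the group T_n is the monoid presented by the
same generators and relations; we construct it as the quotient of the free monoid
(words over the generators) by the congruence generated by the relations.\<close>

datatype gen = Z | T nat

definition gens :: "nat \<Rightarrow> gen set" where
  "gens n = insert Z {T k | k. 1 \<le> k \<and> k \<le> n - 1}"

inductive Trel :: "nat \<Rightarrow> gen list \<Rightarrow> gen list \<Rightarrow> bool" for n where
  inv_t: "1 \<le> i \<Longrightarrow> i \<le> n - 1 \<Longrightarrow> Trel n [T i, T i] []"
| braid: "1 \<le> j \<Longrightarrow> j \<le> n - 2 \<Longrightarrow>
      Trel n [T j, T (Suc j), T j, T (Suc j), T j, T (Suc j)] []"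
| far: "1 \<le> k \<Longrightarrow> k + 2 \<le> l \<Longrightarrow> l \<le> n - 1 \<Longrightarrow>
      Trel n [T k, T l, T k, T l] [Z]"
| inv_z: "Trel n [Z, Z] []"
| central: "1 \<le> i \<Longrightarrow> i \<le> n - 1 \<Longrightarrow> Trel n [Z, T i] [T i, Z]"

inductive Teqv :: "nat \<Rightarrow> gen list \<Rightarrow> gen list \<Rightarrow> bool" for n where
  refl: "Teqv n w w"
| sym: "Teqv n u v \<Longrightarrow> Teqv n v u"
| trans: "Teqv n u v \<Longrightarrow> Teqv n v w \<Longrightarrow> Teqv n u w"
| step: "Trel n u v \<Longrightarrow> Teqv n (a @ u @ b) (a @ v @ b)"

definition Tcls :: "nat \<Rightarrow> gen list \<Rightarrow> gen list set" where
  "Tcls n w = {v. Teqv n w v}"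

definition Tgrp :: "nat \<Rightarrow> gen list set monoid" where
  "Tgrp n = \<lparr> carrier = {Tcls n w | w. set w \<subseteq> gens n},
              mult = (\<lambda>A B. Tcls n ((SOME a. a \<in> A) @ (SOME b. b \<in> B))),
              one = Tcls n [] \<rparr>"

definition zT :: "nat \<Rightarrow> gen list set" where
  "zT n = Tcls n [Z]"

definition tT :: "nat \<Rightarrow> nat \<Rightarrow> gen list set" where
  "tT n k = Tcls n [T k]"

text \<open>Permutations of {1..n} as functions nat => nat; s_k = (k k+1).
Products act on the left: (\<sigma> \<tau>)(x) = \<sigma>(\<tau>(x)).\<close>

definition s_perm :: "nat \<Rightarrow> nat \<Rightarrow> nat" where
  "s_perm k = transpose k (Suc k)"

definition sword :: "nat list \<Rightarrow> nat \<Rightarrow> nat" where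
  "sword ks = foldr (\<lambda>k f. s_perm k \<circ> f) ks id"

definition p_gen :: "gen \<Rightarrow> nat \<Rightarrow> nat" where
  "p_gen g = (case g of Z \<Rightarrow> id | T k \<Rightarrow> s_perm k)"

definition p_word :: "gen list \<Rightarrow> nat \<Rightarrow> nat" where
  "p_word w = foldr (\<lambda>g f. p_gen g \<circ> f) w id"

definition pT :: "gen list set \<Rightarrow> nat \<Rightarrow> nat" where
  "pT A = p_word (SOME w. w \<in> A)"

definition act :: "nat \<Rightarrow> (nat \<Rightarrow> nat) \<Rightarrow> gen list set \<Rightarrow> gen list set" where
  "act n \<sigma> t = (let b = (SOME b. b \<in> carrier (Tgrp n) \<and> pT b = \<sigma>)
                in b \<otimes>\<^bsub>Tgrp n\<^esub> t \<otimes>\<^bsub>Tgrp n\<^esub> inv\<^bsub>Tgrp n\<^esub> b)"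

text \<open>brk n i d = [i, i+d+1]:  [i i+1] = t_i,  [i j] = (s_i \<triangleright> [i+1 j]) z for i+1<j.\<close>
fun brk :: "nat \<Rightarrow> nat \<Rightarrow> nat \<Rightarrow> gen list set" where
  "brk n i 0 = tT n i"
| "brk n i (Suc d) = act n (s_perm i) (brk n (Suc i) d) \<otimes>\<^bsub>Tgrp n\<^esub> zT n"

definition br :: "nat \<Rightarrow> nat \<Rightarrow> nat \<Rightarrow> gen list set" where
  "br n i j = (if i < j then brk n i (j - i - 1)
               else if j < i then brk n j (i - j - 1) \<otimes>\<^bsub>Tgrp n\<^esub> zT n
               else undefined)"

end

theory Submission
  imports Defs "HOL-Combinatorics.Permutations"
begin

text \<open>We compute with words in the generators. Conjugating the word for [i j] by a single
generator t_k gives, modulo the relations, the word for [s_k(i) s_k(j)] followed by z; this goes by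
induction on j - i, according to whether k is i, i - 1, i + 1 or far from i, using the braid and
far commutation relations. Conjugating by an arbitrary word w therefore yields [p(w)(i) p(w)(j)]
times z^m, where m is the number of letters t_k in w. The action picks some representative of
\<sigma> whose letter count may differ from l, but its parity is fixed by the sign of \<sigma>,
and z^2 = 1.\<close>

lemma T_in_gens: "T k \<in> gens n \<longleftrightarrow> 1 \<le> k \<and> k \<le> n - 1"
  by (simp add: gens_def)

lemma Z_in_gens: "Z \<in> gens n"
  by (simp add: gens_def)

section \<open>Words modulo the defining relations\<close>

lemmas [trans] = Teqv.trans

lemma Teqv_append_right: "Teqv n u v \<Longrightarrow> Teqv n (u @ w) (v @ w)"
proof (induction rule: Teqv.induct)
  case (step u v a b)
  then show ?case using Teqv.step[OF step, of a "b @ w"] by simp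
qed (auto intro: Teqv.intros)

lemma Teqv_append_left: "Teqv n u v \<Longrightarrow> Teqv n (w @ u) (w @ v)"
proof (induction rule: Teqv.induct)
  case (step u v a b)
  then show ?case using Teqv.step[OF step, of "w @ a" b] by simp
qed (auto intro: Teqv.intros)

lemma Teqv_context: "Teqv n u v \<Longrightarrow> Teqv n (a @ u @ b) (a @ v @ b)"
  by (intro Teqv_append_left Teqv_append_right)

lemma Teqv_append: "Teqv n u u' \<Longrightarrow> Teqv n v v' \<Longrightarrow> Teqv n (u @ v) (u' @ v')"
  by (meson Teqv.trans Teqv_append_left Teqv_append_right)

lemma Teqv_cancel_T: "T k \<in> gens n \<Longrightarrow> Teqv n (a @ [T k, T k] @ b) (a @ b)"
  using Teqv.step[OF Trel.inv_t, of k n a b] by (simp add: T_in_gens)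

lemma Teqv_cancel_Z: "Teqv n (a @ [Z, Z] @ b) (a @ b)"
  using Teqv.step[OF Trel.inv_z, of n a b] by simp

lemma Teqv_Z_commute: "set w \<subseteq> gens n \<Longrightarrow> Teqv n (a @ Z # w @ b) (a @ w @ Z # b)"
proof (induction w arbitrary: a)
  case Nil
  then show ?case by (simp add: Teqv.refl)
next
  case (Cons g w)
  have "Teqv n (a @ Z # g # w @ b) ((a @ [g]) @ Z # w @ b)"
  proof (cases g)
    case Z
    then show ?thesis by (simp add: Teqv.refl)
  next
    case (T k)
    then show ?thesis
      using Cons.prems Teqv.step[OF Trel.central, of k n a "w @ b"] by (simp add: T_in_gens)
  qed
  also have "Teqv n \<dots> ((a @ [g]) @ w @ Z # b)"
    using Cons.IH[of "a @ [g]"] Cons.prems by simp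
  finally show ?case by simp
qed

lemma Teqv_Z_power_commute:
  "set w \<subseteq> gens n \<Longrightarrow> Teqv n (a @ replicate m Z @ w @ b) (a @ w @ replicate m Z @ b)"
proof (induction m arbitrary: a)
  case 0
  then show ?case by (simp add: Teqv.refl)
next
  case (Suc m)
  have "Teqv n ((a @ [Z]) @ replicate m Z @ w @ b) ((a @ [Z]) @ w @ replicate m Z @ b)"
    using Suc by blast
  also have "Teqv n \<dots> (a @ w @ Z # replicate m Z @ b)"
    using Teqv_Z_commute[OF Suc.prems, of a "replicate m Z @ b"] by simp
  finally show ?case by (simp add: replicate_app_Cons_same)
qed

lemma Teqv_replicate_Z_mod_2: "Teqv n (replicate c Z) (replicate (c mod 2) Z)"
proof (induction c rule: nat_less_induct)
  case (1 c)
  show ?case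
  proof (cases c)
    case (Suc c')
    show ?thesis
    proof (cases c')
      case (Suc m)
      have "Teqv n ([] @ [Z, Z] @ replicate m Z) (replicate m Z)"
        using Teqv_cancel_Z[of n "[]" "replicate m Z"] by simp
      also have "Teqv n \<dots> (replicate (m mod 2) Z)"
        using "1" \<open>c = Suc c'\<close> Suc by simp
      finally show ?thesis using \<open>c = Suc c'\<close> Suc by simp
    qed (simp add: \<open>c = Suc c'\<close> Teqv.refl)
  qed (simp add: Teqv.refl)
qed

lemma Teqv_replicate_Z: "even c = even m \<Longrightarrow> Teqv n (replicate c Z) (replicate m Z)"
  using Teqv_replicate_Z_mod_2[of n c] Teqv_replicate_Z_mod_2[of n m]
  by (metis Teqv.sym Teqv.trans even_iff_mod_2_eq_zero odd_iff_mod_2_eq_one)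

lemma Teqv_rev_append_self: "set w \<subseteq> gens n \<Longrightarrow> Teqv n (rev w @ w) []"
proof (induction w)
  case Nil
  then show ?case by (simp add: Teqv.refl)
next
  case (Cons g w)
  have "Teqv n (rev w @ [g, g] @ w) (rev w @ w)"
    using Cons.prems Teqv_cancel_T[of _ n "rev w" w] Teqv_cancel_Z[of n "rev w" w]
    by (cases g) (auto simp: T_in_gens)
  with Cons show ?case by (auto intro: Teqv.trans)
qed

lemma Teqv_far_commute:
  assumes k: "T k \<in> gens n" and l: "T l \<in> gens n" and far: "k + 2 \<le> l \<or> l + 2 \<le> k"
  shows "Teqv n [T k, T l] [Z, T l, T k]"
proof -
  have ordered: "Teqv n [T a, T b] [Z, T b, T a]"
    if a: "T a \<in> gens n" and b: "T b \<in> gens n" and ab: "a + 2 \<le> b" for a b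
  proof -
    have "Teqv n [Z, T b, T a] ([T a, T b, T a, T b] @ [T b, T a])"
      using Teqv_context[OF Teqv.sym[OF Teqv.step[OF Trel.far, of a b n "[]" "[]"]],
                         of "[]" "[T b, T a]"]
        a b ab by (simp add: T_in_gens)
    also have "Teqv n \<dots> ([T a, T b, T a] @ [T a])"
      using Teqv_cancel_T[OF b, of "[T a, T b, T a]" "[T a]"] by simp
    also have "Teqv n \<dots> [T a, T b]"
      using Teqv_cancel_T[OF a, of "[T a, T b]" "[]"] by simp
    finally show ?thesis by (rule Teqv.sym)
  qed
  show ?thesis
  proof (cases "k + 2 \<le> l")
    case True
    then show ?thesis using ordered[OF k l] by simp
  next
    case False
    have "Teqv n [T k, T l] ([] @ [Z, Z] @ [T k, T l])"
      using Teqv.sym[OF Teqv_cancel_Z[of n "[]" "[T k, T l]"]] by simp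
    also have "Teqv n \<dots> ([Z] @ [T l, T k])"
      using Teqv_context[OF Teqv.sym[OF ordered[OF l k]], of "[Z]" "[]"] False far by simp
    finally show ?thesis by simp
  qed
qed

lemma Teqv_braid:
  assumes j: "T j \<in> gens n" and j1: "T (Suc j) \<in> gens n"
  shows "Teqv n [T j, T (Suc j), T j] [T (Suc j), T j, T (Suc j)]"
proof -
  have braid: "Teqv n [T j, T (Suc j), T j, T (Suc j), T j, T (Suc j)] []"
    using Teqv.step[OF Trel.braid, of j n "[]" "[]"] j j1 by (simp add: T_in_gens)
  have "Teqv n [T j, T (Suc j), T j] ([T j, T (Suc j), T j] @ [T (Suc j), T (Suc j)] @ [])"
    using Teqv.sym[OF Teqv_cancel_T[OF j1, of "[T j, T (Suc j), T j]" "[]"]] by simp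
  also have "Teqv n \<dots> ([T j, T (Suc j), T j, T (Suc j)] @ [T j, T j] @ [T (Suc j)])"
    using Teqv.sym[OF Teqv_cancel_T[OF j, of "[T j, T (Suc j), T j, T (Suc j)]" "[T (Suc j)]"]]
    by simp
  also have "Teqv n \<dots> ([T j, T (Suc j), T j, T (Suc j), T j] @ [T (Suc j), T (Suc j)]
                          @ [T j, T (Suc j)])"
    using Teqv.sym[OF Teqv_cancel_T[OF j1, of "[T j, T (Suc j), T j, T (Suc j), T j]"
                                              "[T j, T (Suc j)]"]]
    by simp
  also have "\<dots> = [T j, T (Suc j), T j, T (Suc j), T j, T (Suc j)] @ [T (Suc j), T j, T (Suc j)]"
    by simp
  also have "Teqv n \<dots> ([] @ [T (Suc j), T j, T (Suc j)])"
    using Teqv_append_right[OF braid] by simp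
  finally show ?thesis by simp
qed

definition conj_word :: "nat \<Rightarrow> gen list \<Rightarrow> gen list" where
  "conj_word k x = T k # x @ [T k]"

lemma conj_word_cong: "Teqv n x y \<Longrightarrow> Teqv n (conj_word k x) (conj_word k y)"
  unfolding conj_word_def using Teqv_context[of n x y "[T k]" "[T k]"] by simp

lemma conj_word_snoc_Z: "T k \<in> gens n \<Longrightarrow> Teqv n (conj_word k (x @ [Z])) (conj_word k x @ [Z])"
  unfolding conj_word_def using Teqv.step[OF Trel.central, of k n "T k # x" "[]"]
  by (simp add: T_in_gens)

lemma conj_word_conj_word: "T k \<in> gens n \<Longrightarrow> Teqv n (conj_word k (conj_word k x)) x"
proof -
  assume k: "T k \<in> gens n"
  have "Teqv n ([] @ [T k, T k] @ x @ [T k, T k]) (x @ [T k, T k] @ [])"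
    using Teqv_cancel_T[OF k, of "[]" "x @ [T k, T k]"] by simp
  also have "Teqv n \<dots> x"
    using Teqv_cancel_T[OF k, of x "[]"] by simp
  finally show ?thesis by (simp add: conj_word_def)
qed

lemma conj_word_far_commute:
  assumes k: "T k \<in> gens n" and i: "T i \<in> gens n" and far: "k + 2 \<le> i \<or> i + 2 \<le> k"
    and x: "set x \<subseteq> gens n"
  shows "Teqv n (conj_word k (conj_word i x)) (conj_word i (conj_word k x))"
proof -
  have "Teqv n ([] @ [T k, T i] @ x @ [T i, T k]) ([] @ [Z, T i, T k] @ x @ [T i, T k])"
    by (rule Teqv_context, rule Teqv_far_commute[OF k i far])
  also have "\<dots> = (Z # [T i, T k] @ x) @ [T i, T k] @ []"
    by simp
  also have "Teqv n \<dots> ((Z # [T i, T k] @ x) @ [Z, T k, T i] @ [])"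
    by (rule Teqv_context, rule Teqv_far_commute[OF i k]) (use far in auto)
  also have "\<dots> = [] @ Z # ([T i, T k] @ x) @ [Z, T k, T i]"
    by simp
  also have "Teqv n \<dots> ([] @ ([T i, T k] @ x) @ Z # [Z, T k, T i])"
    by (rule Teqv_Z_commute) (use x i k in auto)
  also have "\<dots> = ([T i, T k] @ x) @ [Z, Z] @ [T k, T i]"
    by simp
  also have "Teqv n \<dots> (([T i, T k] @ x) @ [T k, T i])"
    by (rule Teqv_cancel_Z)
  finally show ?thesis by (simp add: conj_word_def)
qed

lemma conj_word_braid:
  assumes i: "T i \<in> gens n" and i1: "T (Suc i) \<in> gens n"
  shows "Teqv n (conj_word (Suc i) (conj_word i x))
                (conj_word i (conj_word (Suc i) (conj_word i (conj_word (Suc i) x))))"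
proof -
  have left: "Teqv n [T (Suc i), T i] [T i, T (Suc i), T i, T (Suc i)]"
  proof -
    have "Teqv n ([] @ [T i, T (Suc i), T i] @ [T (Suc i)]) ([] @ [T (Suc i), T i, T (Suc i)] @ [T (Suc i)])"
      by (rule Teqv_context, rule Teqv_braid[OF i i1])
    also have "Teqv n \<dots> [T (Suc i), T i]"
      using Teqv_cancel_T[OF i1, of "[T (Suc i), T i]" "[]"] by simp
    finally show ?thesis by (simp add: Teqv.sym)
  qed
  have right: "Teqv n [T i, T (Suc i)] [T (Suc i), T i, T (Suc i), T i]"
  proof -
    have "Teqv n ([T (Suc i)] @ [T i, T (Suc i), T i] @ []) ([T (Suc i)] @ [T (Suc i), T i, T (Suc i)] @ [])"
      by (rule Teqv_context, rule Teqv_braid[OF i i1])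
    also have "Teqv n \<dots> [T i, T (Suc i)]"
      using Teqv_cancel_T[OF i1, of "[]" "[T i, T (Suc i)]"] by simp
    finally show ?thesis by (simp add: Teqv.sym)
  qed
  have "Teqv n ([] @ [T (Suc i), T i] @ x @ [T i, T (Suc i)])
               ([] @ [T i, T (Suc i), T i, T (Suc i)] @ x @ [T i, T (Suc i)])"
    by (rule Teqv_context[OF left])
  also have "\<dots> = ([T i, T (Suc i), T i, T (Suc i)] @ x) @ [T i, T (Suc i)] @ []"
    by simp
  also have "Teqv n \<dots> (([T i, T (Suc i), T i, T (Suc i)] @ x) @ [T (Suc i), T i, T (Suc i), T i] @ [])"
    by (rule Teqv_context[OF right])
  finally show ?thesis by (simp add: conj_word_def)
qed

fun brk_word :: "nat \<Rightarrow> nat \<Rightarrow> gen list" where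
  "brk_word i 0 = [T i]"
| "brk_word i (Suc d) = conj_word i (brk_word (Suc i) d) @ [Z]"

definition br_word :: "nat \<Rightarrow> nat \<Rightarrow> gen list" where
  "br_word a b = (if a < b then brk_word a (b - a - 1) else brk_word b (a - b - 1) @ [Z])"

lemma br_word_less: "a < b \<Longrightarrow> br_word a b = brk_word a (b - a - 1)"
  by (simp add: br_word_def)

lemma br_word_greater: "b < a \<Longrightarrow> br_word a b = brk_word b (a - b - 1) @ [Z]"
  by (simp add: br_word_def)

lemma br_word_Suc_left: "Suc i < j \<Longrightarrow> br_word i j = conj_word i (br_word (Suc i) j) @ [Z]"
  by (simp add: br_word_def flip: brk_word.simps(2) Suc_diff_Suc)

lemma set_brk_word: "1 \<le> i \<Longrightarrow> i + d + 1 \<le> n \<Longrightarrow> set (brk_word i d) \<subseteq> gens n"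
  by (induction d arbitrary: i) (auto simp: conj_word_def T_in_gens Z_in_gens)

lemma set_br_word: "a \<in> {1..n} \<Longrightarrow> b \<in> {1..n} \<Longrightarrow> a \<noteq> b \<Longrightarrow> set (br_word a b) \<subseteq> gens n"
  using set_brk_word[of a "b - a - 1" n] set_brk_word[of b "a - b - 1" n]
  by (auto simp: br_word_def Z_in_gens)

lemma br_word_swap: "a \<noteq> b \<Longrightarrow> Teqv n (br_word a b @ [Z]) (br_word b a)"
proof (cases "a < b")
  case True
  then show ?thesis by (simp add: br_word_def Teqv.refl)
next
  case False
  assume "a \<noteq> b"
  with False show ?thesis
    using Teqv_cancel_Z[of n "br_word b a" "[]"] by (simp add: br_word_def)
qed

lemma s_perm_apply: "s_perm k x = (if x = k then Suc k else if x = Suc k then k else x)"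
  by (simp add: s_perm_def transpose_def)

lemma s_perm_eq_iff: "s_perm k a = s_perm k b \<longleftrightarrow> a = b"
  by (auto simp: s_perm_apply)

section \<open>Conjugating [i j] by a generator\<close>

lemma conj_word_T:
  assumes k: "T k \<in> gens n" and i: "T i \<in> gens n"
  shows "Teqv n (conj_word k [T i]) (br_word (s_perm k i) (s_perm k (Suc i)) @ [Z])"
proof -
  have add_ZZ: "Teqv n w (w @ [Z, Z])" for w
    using Teqv.sym[OF Teqv_cancel_Z[of n w "[]"]] by simp
  consider "k = i" | "Suc k = i" | "k = Suc i" | "k + 2 \<le> i \<or> i + 2 \<le> k"
    by linarith
  then show ?thesis
  proof cases
    case 1
    have "Teqv n ([] @ [T i, T i] @ [T i]) [T i]"
      using Teqv_cancel_T[OF i, of "[]" "[T i]"] by simp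
    then show ?thesis
      using 1 add_ZZ[of "[T i]"] by (auto simp: conj_word_def s_perm_apply br_word_def intro: Teqv.trans)
  next
    case 2
    then show ?thesis
      using add_ZZ[of "[T k, T i, T k]"] by (auto simp: conj_word_def s_perm_apply br_word_def)
  next
    case 3
    have "Teqv n [T (Suc i), T i, T (Suc i)] [T i, T (Suc i), T i]"
      using Teqv_braid[OF i] k 3 by (simp add: Teqv.sym)
    then show ?thesis
      using 3 add_ZZ[of "[T i, T (Suc i), T i]"]
      by (auto simp: conj_word_def s_perm_apply br_word_def intro: Teqv.trans)
  next
    case 4
    have "Teqv n ([] @ [T k, T i] @ [T k]) ([] @ [Z, T i, T k] @ [T k])"
      by (rule Teqv_context, rule Teqv_far_commute[OF k i 4])
    also have "Teqv n \<dots> ([] @ Z # [T i] @ [])"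
      using Teqv_cancel_T[OF k, of "[Z, T i]" "[]"] by simp
    also have "Teqv n \<dots> ([] @ [T i] @ Z # [])"
      by (rule Teqv_Z_commute) (use i in simp)
    finally show ?thesis
      using 4 by (auto simp: conj_word_def s_perm_apply br_word_def)
  qed
qed

lemma conj_word_brk_word_self:
  "T i \<in> gens n \<Longrightarrow> Teqv n (conj_word i (brk_word i (Suc d))) (brk_word (Suc i) d @ [Z])"
  using Teqv.trans[OF conj_word_snoc_Z Teqv_append_right[OF conj_word_conj_word]] by simp

lemma conj_word_brk_word_Suc: "Teqv n (conj_word k (brk_word (Suc k) d)) (brk_word k (Suc d) @ [Z])"
  using Teqv.sym[OF Teqv_cancel_Z[of n "conj_word k (brk_word (Suc k) d)" "[]"]] by simp

lemma conj_word_brk_word_one: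
  assumes i: "T i \<in> gens n" and i1: "T (Suc i) \<in> gens n"
  shows "Teqv n (conj_word (Suc i) (brk_word i 1)) [T i, Z]"
proof -
  have "Teqv n (conj_word (Suc i) (brk_word i 1)) (conj_word (Suc i) (conj_word i [T (Suc i)]) @ [Z])"
    by (simp add: conj_word_snoc_Z[OF i1])
  also have "\<dots> = [] @ [T (Suc i), T i, T (Suc i)] @ [T i, T (Suc i), Z]"
    by (simp add: conj_word_def)
  also have "Teqv n \<dots> ([] @ [T i, T (Suc i), T i] @ [T i, T (Suc i), Z])"
    by (rule Teqv_context, rule Teqv.sym, rule Teqv_braid[OF i i1])
  also have "Teqv n \<dots> ([T i] @ [T (Suc i), T (Suc i)] @ [Z])"
    using Teqv_cancel_T[OF i, of "[T i, T (Suc i)]" "[T (Suc i), Z]"] by simp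
  also have "Teqv n \<dots> [T i, Z]"
    using Teqv_cancel_T[OF i1, of "[T i]" "[Z]"] by simp
  finally show ?thesis .
qed

lemma conj_word_brk_word_inner:
  assumes i: "T i \<in> gens n" and i1: "T (Suc i) \<in> gens n"
    and far: "Teqv n (conj_word i (brk_word (Suc (Suc i)) d)) (brk_word (Suc (Suc i)) d @ [Z])"
  shows "Teqv n (conj_word (Suc i) (brk_word i (Suc (Suc d)))) (brk_word i (Suc (Suc d)) @ [Z])"
proof -
  define Y where "Y = brk_word (Suc (Suc i)) d"
  define X where "X = brk_word (Suc i) (Suc d)"
  have "Teqv n (conj_word (Suc i) (brk_word i (Suc (Suc d)))) (conj_word (Suc i) (conj_word i X) @ [Z])"
    by (simp add: X_def conj_word_snoc_Z[OF i1])
  also have "Teqv n \<dots> (conj_word i (conj_word (Suc i) (conj_word i (conj_word (Suc i) X))) @ [Z])"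
    by (rule Teqv_append_right, rule conj_word_braid[OF i i1])
  also have "Teqv n \<dots> (conj_word i (conj_word (Suc i) (conj_word i (Y @ [Z]))) @ [Z])"
    unfolding X_def Y_def by (intro Teqv_append_right conj_word_cong conj_word_brk_word_self i1)
  also have "Teqv n \<dots> (conj_word i (conj_word (Suc i) (conj_word i Y @ [Z])) @ [Z])"
    by (intro Teqv_append_right conj_word_cong conj_word_snoc_Z i)
  also have "Teqv n \<dots> (conj_word i (conj_word (Suc i) (Y @ [Z, Z] @ [])) @ [Z])"
    using Teqv_append_right[OF far, of "[Z]"] unfolding Y_def
    by (intro Teqv_append_right conj_word_cong) simp
  also have "Teqv n \<dots> (conj_word i (conj_word (Suc i) Y) @ [Z])"
    using Teqv_cancel_Z[of n Y "[]"] by (intro Teqv_append_right conj_word_cong) simp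
  also have "Teqv n \<dots> (conj_word i (X @ [Z]) @ [Z])"
    unfolding X_def Y_def by (intro Teqv_append_right conj_word_cong conj_word_brk_word_Suc)
  also have "Teqv n \<dots> ((conj_word i X @ [Z]) @ [Z])"
    by (intro Teqv_append_right conj_word_snoc_Z i)
  finally show ?thesis by (simp add: X_def)
qed

lemma conj_word_conj_word_snoc_Z_far:
  assumes k: "T k \<in> gens n" and i: "T i \<in> gens n" and far: "k + 2 \<le> i \<or> i + 2 \<le> k"
    and X: "set X \<subseteq> gens n" and conj_X: "Teqv n (conj_word k X) (Y @ [Z])"
  shows "Teqv n (conj_word k (conj_word i X @ [Z])) ((conj_word i Y @ [Z]) @ [Z])"
proof -
  have "Teqv n (conj_word k (conj_word i X @ [Z])) (conj_word k (conj_word i X) @ [Z])"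
    by (rule conj_word_snoc_Z[OF k])
  also have "Teqv n \<dots> (conj_word i (conj_word k X) @ [Z])"
    by (intro Teqv_append_right conj_word_far_commute k i far X)
  also have "Teqv n \<dots> (conj_word i (Y @ [Z]) @ [Z])"
    by (intro Teqv_append_right conj_word_cong conj_X)
  also have "Teqv n \<dots> ((conj_word i Y @ [Z]) @ [Z])"
    by (intro Teqv_append_right conj_word_snoc_Z i)
  finally show ?thesis .
qed

lemma conj_word_brk_word:
  assumes "T k \<in> gens n" and "1 \<le> i" and "i + d + 1 \<le> n"
  shows "Teqv n (conj_word k (brk_word i d)) (br_word (s_perm k i) (s_perm k (i + d + 1)) @ [Z])"
  using assms
proof (induction d arbitrary: i k rule: less_induct)
  case (less d i k)
  have k: "T k \<in> gens n" and i: "T i \<in> gens n"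
    using less.prems by (auto simp: T_in_gens)
  show ?case
  proof (cases d)
    case 0
    then show ?thesis using conj_word_T[OF k i] by simp
  next
    case (Suc e)
    consider "k = i" | "Suc k = i" | "k = Suc i" | "k + 2 \<le> i \<or> i + 2 \<le> k"
      by linarith
    then show ?thesis
    proof cases
      case 1
      then show ?thesis
        using conj_word_brk_word_self[OF i, of e] Suc by (simp add: s_perm_apply br_word_less)
    next
      case 2
      then show ?thesis
        using conj_word_brk_word_Suc[of n k d] by (simp add: s_perm_apply br_word_less del: brk_word.simps)
    next
      case 3
      then have i1: "T (Suc i) \<in> gens n" using k by simp
      show ?thesis
      proof (cases e)
        case 0
        then show ?thesis
          using conj_word_brk_word_one[OF i i1] 3 Suc by (simp add: s_perm_apply br_word_def)
      next
        case (Suc f)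
        have "Teqv n (conj_word i (brk_word (Suc (Suc i)) f)) (brk_word (Suc (Suc i)) f @ [Z])"
          using less.IH[of f i "Suc (Suc i)"] less.prems i \<open>d = Suc e\<close> Suc
          by (simp add: s_perm_apply br_word_less)
        then show ?thesis
          using conj_word_brk_word_inner[OF i i1] 3 \<open>d = Suc e\<close> Suc
          by (simp add: s_perm_apply br_word_less)
      qed
    next
      case 4
      define j where "j = s_perm k (i + d + 1)"
      have fixed: "s_perm k i = i" "s_perm k (Suc i) = Suc i"
        using 4 by (auto simp: s_perm_apply)
      have j: "Suc i < j"
        using 4 Suc by (auto simp: j_def s_perm_apply)
      have "Teqv n (conj_word k (brk_word (Suc i) e)) (br_word (Suc i) j @ [Z])"
        using less.IH[of e k "Suc i"] less.prems Suc fixed by (simp add: j_def)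
      from conj_word_conj_word_snoc_Z_far[OF k i 4 _ this]
      show ?thesis
        unfolding fixed(1) j_def[symmetric] using set_brk_word[of "Suc i" e n] less.prems Suc
        by (simp add: br_word_Suc_left[OF j])
    qed
  qed
qed

lemma conj_word_br_word:
  assumes k: "T k \<in> gens n" and a: "a \<in> {1..n}" and b: "b \<in> {1..n}" and ab: "a \<noteq> b"
  shows "Teqv n (conj_word k (br_word a b)) (br_word (s_perm k a) (s_perm k b) @ [Z])"
proof (cases "a < b")
  case True
  then show ?thesis using conj_word_brk_word[OF k, of a "b - a - 1"] a b by (simp add: br_word_less)
next
  case False
  then have ba: "b < a" using ab by simp
  have "Teqv n (conj_word k (brk_word b (a - b - 1) @ [Z])) (conj_word k (brk_word b (a - b - 1)) @ [Z])"
    by (rule conj_word_snoc_Z[OF k])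
  also have "Teqv n \<dots> ((br_word (s_perm k b) (s_perm k a) @ [Z]) @ [Z])"
    using conj_word_brk_word[OF k, of b "a - b - 1"] a b ba by (intro Teqv_append_right) simp
  also have "Teqv n \<dots> (br_word (s_perm k a) (s_perm k b) @ [Z])"
    by (rule Teqv_append_right, rule br_word_swap) (use ab in \<open>simp add: s_perm_eq_iff\<close>)
  finally show ?thesis using ba by (simp add: br_word_greater)
qed

definition t_count :: "gen list \<Rightarrow> nat" where
  "t_count w = length (filter (\<lambda>g. g \<noteq> Z) w)"

lemma p_word_Cons: "p_word (g # w) = p_gen g \<circ> p_word w"
  by (simp add: p_word_def)

lemma p_word_append: "p_word (u @ v) = p_word u \<circ> p_word v"
  by (induction u) (auto simp: p_word_def)

lemma p_word_mem_range: "set w \<subseteq> gens n \<Longrightarrow> x \<in> {1..n} \<Longrightarrow> p_word w x \<in> {1..n}"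
  by (induction w) (auto simp: p_word_def p_gen_def s_perm_apply T_in_gens split: gen.splits)

lemma p_word_eq_iff: "p_word w a = p_word w b \<longleftrightarrow> a = b"
  by (induction w) (auto simp: p_word_def p_gen_def s_perm_eq_iff split: gen.splits)

lemma Teqv_conj_br_word:
  assumes w: "set w \<subseteq> gens n" and a: "a \<in> {1..n}" and b: "b \<in> {1..n}" and ab: "a \<noteq> b"
  shows "Teqv n (w @ br_word a b @ rev w)
                (br_word (p_word w a) (p_word w b) @ replicate (t_count w) Z)"
  using w
proof (induction w)
  case Nil
  then show ?case by (simp add: p_word_def t_count_def Teqv.refl)
next
  case (Cons g w)
  define Y where "Y = br_word (p_word w a) (p_word w b)"
  define R where "R = replicate (t_count w) Z"
  have Y: "set Y \<subseteq> gens n"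
    unfolding Y_def using Cons.prems a b ab
    by (intro set_br_word p_word_mem_range) (auto simp: p_word_eq_iff)
  have "Teqv n ([g] @ (w @ br_word a b @ rev w) @ [g]) ([g] @ (Y @ R) @ [g])"
    by (rule Teqv_context) (use Cons in \<open>simp add: Y_def R_def\<close>)
  also have "Teqv n \<dots> (br_word (p_word (g # w) a) (p_word (g # w) b) @ replicate (t_count (g # w)) Z)"
  proof (cases g)
    case Z
    have "Teqv n ([] @ Z # Y @ R @ [Z]) ([] @ Y @ Z # R @ [Z])"
      by (rule Teqv_Z_commute[OF Y])
    also have "\<dots> = (Y @ R) @ [Z, Z] @ []"
      by (simp add: R_def replicate_app_Cons_same)
    also have "Teqv n \<dots> (Y @ R)"
      using Teqv_cancel_Z[of n "Y @ R" "[]"] by simp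
    finally show ?thesis
      using Z by (simp add: Y_def R_def p_word_Cons p_gen_def t_count_def)
  next
    case (T k)
    have k: "T k \<in> gens n" using Cons.prems T by simp
    have "Teqv n ((T k # Y) @ R @ [T k] @ []) ((T k # Y) @ [T k] @ R @ [])"
      unfolding R_def by (rule Teqv_Z_power_commute) (use k in simp)
    also have "\<dots> = conj_word k Y @ R"
      by (simp add: conj_word_def)
    also have "Teqv n \<dots> ((br_word (s_perm k (p_word w a)) (s_perm k (p_word w b)) @ [Z]) @ R)"
      unfolding Y_def using Cons.prems a b ab
      by (intro Teqv_append_right conj_word_br_word k p_word_mem_range) (auto simp: p_word_eq_iff)
    finally show ?thesis
      using T by (simp add: R_def p_word_Cons p_gen_def t_count_def)
  qed
  finally show ?case by simp
qed

section \<open>The group structure on classes of words\<close>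

lemma Tcls_eq_iff: "Tcls n u = Tcls n v \<longleftrightarrow> Teqv n u v"
  unfolding Tcls_def by (auto intro: Teqv.refl Teqv.sym Teqv.trans)

lemma Teqv_some_Tcls: "Teqv n u (SOME a. a \<in> Tcls n u)"
proof -
  have "u \<in> Tcls n u" by (simp add: Tcls_def Teqv.refl)
  then have "(SOME a. a \<in> Tcls n u) \<in> Tcls n u" by (rule someI)
  then show ?thesis by (simp add: Tcls_def)
qed

lemma Tgrp_mult_Tcls: "Tcls n u \<otimes>\<^bsub>Tgrp n\<^esub> Tcls n v = Tcls n (u @ v)"
proof -
  have "Teqv n (u @ v) ((SOME a. a \<in> Tcls n u) @ (SOME b. b \<in> Tcls n v))"
    by (intro Teqv_append Teqv_some_Tcls)
  then show ?thesis by (simp add: Tgrp_def Tcls_eq_iff Teqv.sym)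
qed

lemma Tgrp_one: "\<one>\<^bsub>Tgrp n\<^esub> = Tcls n []"
  by (simp add: Tgrp_def)

lemma carrier_Tgrp: "carrier (Tgrp n) = {Tcls n w | w. set w \<subseteq> gens n}"
  by (simp add: Tgrp_def)

lemma Tcls_in_carrier: "set w \<subseteq> gens n \<Longrightarrow> Tcls n w \<in> carrier (Tgrp n)"
  by (auto simp: carrier_Tgrp)

lemma group_Tgrp: "group (Tgrp n)"
proof (rule groupI)
  fix x y assume "x \<in> carrier (Tgrp n)" "y \<in> carrier (Tgrp n)"
  then obtain u v where "x = Tcls n u" "set u \<subseteq> gens n" "y = Tcls n v" "set v \<subseteq> gens n"
    by (auto simp: carrier_Tgrp)
  then show "x \<otimes>\<^bsub>Tgrp n\<^esub> y \<in> carrier (Tgrp n)"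
    using Tcls_in_carrier[of "u @ v" n] by (simp add: Tgrp_mult_Tcls)
next
  fix x assume "x \<in> carrier (Tgrp n)"
  then obtain w where w: "x = Tcls n w" "set w \<subseteq> gens n" by (auto simp: carrier_Tgrp)
  then have "Tcls n (rev w) \<otimes>\<^bsub>Tgrp n\<^esub> x = \<one>\<^bsub>Tgrp n\<^esub>"
    by (simp add: Tgrp_mult_Tcls Tgrp_one Tcls_eq_iff Teqv_rev_append_self)
  with w show "\<exists>y\<in>carrier (Tgrp n). y \<otimes>\<^bsub>Tgrp n\<^esub> x = \<one>\<^bsub>Tgrp n\<^esub>"
    using Tcls_in_carrier[of "rev w" n] by auto
qed (auto simp: carrier_Tgrp Tgrp_mult_Tcls Tgrp_one)

lemma Tgrp_inv_Tcls: "set w \<subseteq> gens n \<Longrightarrow> inv\<^bsub>Tgrp n\<^esub> (Tcls n w) = Tcls n (rev w)"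
  by (rule group.inv_equality[OF group_Tgrp])
     (simp_all add: Tcls_in_carrier Tgrp_mult_Tcls Tgrp_one Tcls_eq_iff Teqv_rev_append_self)

lemma zT_pow: "zT n [^]\<^bsub>Tgrp n\<^esub> l = Tcls n (replicate l Z)"
  by (induction l) (simp_all add: Tgrp_one zT_def Tgrp_mult_Tcls replicate_append_same)

section \<open>The projection to the symmetric group\<close>

lemma p_word_Teqv: "Teqv n u v \<Longrightarrow> p_word u = p_word v"
proof (induction rule: Teqv.induct)
  case (step u v a b)
  then have "p_word u = p_word v"
    by (induction rule: Trel.induct) (auto simp: p_word_def p_gen_def fun_eq_iff s_perm_apply)
  then show ?case by (simp add: p_word_append)
qed simp_all

lemma pT_Tcls: "pT (Tcls n w) = p_word w"
  unfolding pT_def using p_word_Teqv[OF Teqv_some_Tcls[of n w]] by simp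

lemma permutation_p_gen: "permutation (p_gen g)"
  by (cases g) (simp_all add: p_gen_def s_perm_def permutation_swap_id)

lemma permutation_p_word: "permutation (p_word w)"
proof (induction w)
  case (Cons g w)
  then show ?case
    unfolding p_word_Cons by (rule permutation_compose[OF permutation_p_gen])
qed (simp add: p_word_def)

lemma sign_p_word: "sign (p_word w) = (-1) ^ t_count w"
proof (induction w)
  case (Cons g w)
  have "sign (p_word (g # w)) = sign (p_gen g) * sign (p_word w)"
    unfolding p_word_Cons by (rule sign_compose[OF permutation_p_gen permutation_p_word])
  with Cons show ?case
    by (cases g) (simp_all add: t_count_def p_gen_def s_perm_def sign_swap_id)
qed (simp add: p_word_def t_count_def)

lemma even_t_count_eq: "p_word u = p_word v \<Longrightarrow> even (t_count u) = even (t_count v)"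
  using sign_p_word[of u] sign_p_word[of v] by (auto simp: minus_one_power_iff split: if_splits)

lemma act_Tcls_br_word:
  assumes w: "set w \<subseteq> gens n" and a: "a \<in> {1..n}" and b: "b \<in> {1..n}" and ab: "a \<noteq> b"
  shows "act n (p_word w) (Tcls n (br_word a b))
       = Tcls n (br_word (p_word w a) (p_word w b) @ replicate (t_count w) Z)"
proof -
  define g where "g = (SOME g. g \<in> carrier (Tgrp n) \<and> pT g = p_word w)"
  have "\<exists>g. g \<in> carrier (Tgrp n) \<and> pT g = p_word w"
    using Tcls_in_carrier[OF w] pT_Tcls by blast
  then have "g \<in> carrier (Tgrp n) \<and> pT g = p_word w"
    unfolding g_def by (rule someI_ex)
  then obtain v where g: "g = Tcls n v" and v: "set v \<subseteq> gens n" and pv: "p_word v = p_word w"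
    by (auto simp: carrier_Tgrp pT_Tcls)
  have "act n (p_word w) (Tcls n (br_word a b)) = Tcls n (v @ br_word a b @ rev v)"
    unfolding act_def Let_def g_def[symmetric] g by (simp add: Tgrp_mult_Tcls Tgrp_inv_Tcls v)
  also have "\<dots> = Tcls n (br_word (p_word v a) (p_word v b) @ replicate (t_count v) Z)"
    using Teqv_conj_br_word[OF v a b ab] by (simp add: Tcls_eq_iff)
  also have "\<dots> = Tcls n (br_word (p_word w a) (p_word w b) @ replicate (t_count w) Z)"
    unfolding Tcls_eq_iff pv by (intro Teqv_append_left Teqv_replicate_Z even_t_count_eq pv)
  finally show ?thesis .
qed

lemma brk_eq_Tcls: "1 \<le> i \<Longrightarrow> i + d + 1 \<le> n \<Longrightarrow> brk n i d = Tcls n (brk_word i d)"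
proof (induction d arbitrary: i)
  case 0
  then show ?case by (simp add: tT_def)
next
  case (Suc d)
  have i: "set [T i] \<subseteq> gens n" using Suc.prems by (simp add: T_in_gens)
  have "brk n (Suc i) d = Tcls n (br_word (Suc i) (i + d + 2))"
    using Suc by (simp add: br_word_less)
  moreover have "p_word [T i] = s_perm i"
    by (simp add: p_word_def p_gen_def)
  ultimately have "brk n i (Suc d) = Tcls n (br_word i (i + d + 2) @ [Z] @ [Z])"
    using act_Tcls_br_word[OF i, of "Suc i" "i + d + 2"] Suc.prems
    by (simp add: zT_def Tgrp_mult_Tcls s_perm_apply t_count_def)
  also have "\<dots> = Tcls n (brk_word i (Suc d))"
    unfolding Tcls_eq_iff using Teqv_cancel_Z[of n "br_word i (i + d + 2)" "[]"]
    by (simp add: br_word_less)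
  finally show ?case .
qed

lemma br_eq_Tcls: "i \<in> {1..n} \<Longrightarrow> j \<in> {1..n} \<Longrightarrow> i \<noteq> j \<Longrightarrow> br n i j = Tcls n (br_word i j)"
  by (cases "i < j") (auto simp: br_def br_word_def brk_eq_Tcls zT_def Tgrp_mult_Tcls)

lemma sword_eq_p_word: "sword ks = p_word (map T ks)"
  by (induction ks) (simp_all add: sword_def p_word_def p_gen_def)

theorem proposition3p5:
  fixes n l :: nat and ks :: "nat list" and i j :: nat
  assumes "n \<ge> 4"
    and "length ks = l"
    and "\<forall>k \<in> set ks. 1 \<le> k \<and> k \<le> n - 1"
    and "i \<in> {1..n}" and "j \<in> {1..n}" and "i \<noteq> j"
  shows "act n (sword ks) (br n i j)
         = br n (sword ks i) (sword ks j) \<otimes>\<^bsub>Tgrp n\<^esub> (zT n [^]\<^bsub>Tgrp n\<^esub> l)"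
proof -
  define w where "w = map T ks"
  have w: "set w \<subseteq> gens n"
    using assms(3) by (auto simp: w_def T_in_gens)
  have sword: "sword ks = p_word w"
    by (simp add: w_def sword_eq_p_word)
  have t_count: "t_count w = l"
    using assms(2) by (simp add: w_def t_count_def comp_def)
  have image: "p_word w i \<in> {1..n}" "p_word w j \<in> {1..n}" "p_word w i \<noteq> p_word w j"
    using p_word_mem_range[OF w] assms(4-6) by (simp_all add: p_word_eq_iff)
  show ?thesis
    unfolding sword br_eq_Tcls[OF assms(4-6)] br_eq_Tcls[OF image]
    using act_Tcls_br_word[OF w assms(4-6)] by (simp add: t_count zT_pow Tgrp_mult_Tcls)
qed
end
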